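(* Let $M$ be a lcm-monoid. Then there exists a left $\mathscr{M}$-brace $(\mathcal{B},\oplus,\cdot)$ such that the monoid $(\mathcal{B},\cdot)$ is isomorphic to $M$. Furthermore, if $M$ is a Gaussian monoid, then there exist a left $\mathscr{M}$-brace $(\mathcal{B},\oplus,\cdot)$ and a right $\mathscr{M}$-brace $(\mathcal{B},+,\cdot)$ (on the same set $\mathcal{B}$ with the same multiplication $\cdot$) such that $(\mathcal{B},\cdot)$ is isomorphic to $M$.
   Context: For elements $a,g$ of a monoid $M$, $a$ is a left divisor of $g$ if $g=ab$ for some $b\in M$, and a right divisor of $g$ if $g=ba$ for some $b\in M$. A lcm (resp. gcd) with respect to left divisibility is a least common multiple (resp. greatest common divisor) for the preorder "is a left divisor of"; similarly for right divisibility. An element $a\neq 1$ of $M$ is an atom if $a=bc$ implies $b=1$ or $c=1$; $M$ is atomic if it is generated by its atoms and every element is a finite product of atoms. A monoid $M$ is a lcm-monoid if (i) $1$ is the unique invertible element of $M$, (ii) $M$ is left cancellative, and (iii) every pair of elements of $M$ has a lcm with respect to left divisibility. A monoid $M$ is a Gaussian monoid if (i) $M$ is atomic, (ii) $M$ is cancellative (left and right), and (iii) every pair of elements of $M$ has a lcm and a gcd with respect to both left and right divisibility. A left $\mathscr{M}$-brace is a set $\mathcal{B}$ with two operations $\oplus$ and $\cdot$ such that $(\mathcal{B},\oplus)$ is a commutative monoid, $(\mathcal{B},\cdot)$ is a monoid, and for all $a,b,c\in\mathcal{B}$: $a\cdot(b\oplus c)=a\cdot b\oplus a\cdot c$. A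 right $\mathscr{M}$-brace is defined similarly, with the axiom $(a\oplus b)\cdot c=a\cdot c\oplus b\cdot c$ for all $a,b,c\in\mathcal{B}$ instead. *)

theory Defs
  imports "HOL-Algebra.Group"
begin

definition left_divides :: "('a, 'b) monoid_scheme \<Rightarrow> 'a \<Rightarrow> 'a \<Rightarrow> bool" where
  "left_divides M a g \<longleftrightarrow> a \<in> carrier M \<and> g \<in> carrier M \<and>
     (\<exists>b\<in>carrier M. g = a \<otimes>\<^bsub>M\<^esub> b)"

definition right_divides :: "('a, 'b) monoid_scheme \<Rightarrow> 'a \<Rightarrow> 'a \<Rightarrow> bool" where
  "right_divides M a g \<longleftrightarrow> a \<in> carrier M \<and> g \<in> carrier M \<and>
     (\<exists>b\<in>carrier M. g = b \<otimes>\<^bsub>M\<^esub> a)"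

definition is_lcm_wrt :: "'a set \<Rightarrow> ('a \<Rightarrow> 'a \<Rightarrow> bool) \<Rightarrow> 'a \<Rightarrow> 'a \<Rightarrow> 'a \<Rightarrow> bool" where
  "is_lcm_wrt C R a b m \<longleftrightarrow> m \<in> C \<and> R a m \<and> R b m \<and>
     (\<forall>n\<in>C. R a n \<and> R b n \<longrightarrow> R m n)"

definition is_gcd_wrt :: "'a set \<Rightarrow> ('a \<Rightarrow> 'a \<Rightarrow> bool) \<Rightarrow> 'a \<Rightarrow> 'a \<Rightarrow> 'a \<Rightarrow> bool" where
  "is_gcd_wrt C R a b d \<longleftrightarrow> d \<in> C \<and> R d a \<and> R d b \<and>
     (\<forall>n\<in>C. R n a \<and> R n b \<longrightarrow> R n d)"

definition left_cancellative :: "('a, 'b) monoid_scheme \<Rightarrow> bool" where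
  "left_cancellative M \<longleftrightarrow> (\<forall>a\<in>carrier M. \<forall>b\<in>carrier M. \<forall>c\<in>carrier M.
     a \<otimes>\<^bsub>M\<^esub> b = a \<otimes>\<^bsub>M\<^esub> c \<longrightarrow> b = c)"

definition right_cancellative :: "('a, 'b) monoid_scheme \<Rightarrow> bool" where
  "right_cancellative M \<longleftrightarrow> (\<forall>a\<in>carrier M. \<forall>b\<in>carrier M. \<forall>c\<in>carrier M.
     b \<otimes>\<^bsub>M\<^esub> a = c \<otimes>\<^bsub>M\<^esub> a \<longrightarrow> b = c)"

definition is_atom :: "('a, 'b) monoid_scheme \<Rightarrow> 'a \<Rightarrow> bool" where
  "is_atom M a \<longleftrightarrow> a \<in> carrier M \<and> a \<noteq> \<one>\<^bsub>M\<^esub> \<and>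
     (\<forall>b\<in>carrier M. \<forall>c\<in>carrier M. a = b \<otimes>\<^bsub>M\<^esub> c \<longrightarrow> b = \<one>\<^bsub>M\<^esub> \<or> c = \<one>\<^bsub>M\<^esub>)"

definition atomic_monoid :: "('a, 'b) monoid_scheme \<Rightarrow> bool" where
  "atomic_monoid M \<longleftrightarrow> (\<forall>g\<in>carrier M. \<exists>xs. (\<forall>x\<in>set xs. is_atom M x) \<and>
     g = foldr (\<lambda>x y. x \<otimes>\<^bsub>M\<^esub> y) xs \<one>\<^bsub>M\<^esub>)"

definition lcm_monoid :: "('a, 'b) monoid_scheme \<Rightarrow> bool" where
  "lcm_monoid M \<longleftrightarrow> monoid M \<and> Units M = {\<one>\<^bsub>M\<^esub>} \<and> left_cancellative M \<and>
     (\<forall>a\<in>carrier M. \<forall>b\<in>carrier M. \<exists>m. is_lcm_wrt (carrier M) (left_divides M) a b m)"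

definition gaussian_monoid :: "('a, 'b) monoid_scheme \<Rightarrow> bool" where
  "gaussian_monoid M \<longleftrightarrow> monoid M \<and> atomic_monoid M \<and>
     left_cancellative M \<and> right_cancellative M \<and>
     (\<forall>a\<in>carrier M. \<forall>b\<in>carrier M.
        (\<exists>m. is_lcm_wrt (carrier M) (left_divides M) a b m) \<and>
        (\<exists>d. is_gcd_wrt (carrier M) (left_divides M) a b d) \<and>
        (\<exists>m. is_lcm_wrt (carrier M) (right_divides M) a b m) \<and>
        (\<exists>d. is_gcd_wrt (carrier M) (right_divides M) a b d))"

text \<open>A brace is given by an additive monoid record A (operation \<otimes> of A plays the role of \<oplus>)
  and a multiplicative monoid record P on the same carrier.\<close>
definition left_M_brace :: "'a monoid \<Rightarrow> 'a monoid \<Rightarrow> bool" where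
  "left_M_brace A P \<longleftrightarrow> comm_monoid A \<and> monoid P \<and> carrier A = carrier P \<and>
     (\<forall>a\<in>carrier P. \<forall>b\<in>carrier P. \<forall>c\<in>carrier P.
        a \<otimes>\<^bsub>P\<^esub> (b \<otimes>\<^bsub>A\<^esub> c) = (a \<otimes>\<^bsub>P\<^esub> b) \<otimes>\<^bsub>A\<^esub> (a \<otimes>\<^bsub>P\<^esub> c))"

definition right_M_brace :: "'a monoid \<Rightarrow> 'a monoid \<Rightarrow> bool" where
  "right_M_brace A P \<longleftrightarrow> comm_monoid A \<and> monoid P \<and> carrier A = carrier P \<and>
     (\<forall>a\<in>carrier P. \<forall>b\<in>carrier P. \<forall>c\<in>carrier P.
        (a \<otimes>\<^bsub>A\<^esub> b) \<otimes>\<^bsub>P\<^esub> c = (a \<otimes>\<^bsub>P\<^esub> c) \<otimes>\<^bsub>A\<^esub> (b \<otimes>\<^bsub>P\<^esub> c))"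

end

theory Submission
  imports Defs
begin

text \<open>In an lcm-monoid left divisibility is a partial order: left cancellation and the absence of
  nontrivial units make it antisymmetric. Hence the left lcm is a well-defined operation, which is
  commutative, associative and has neutral element 1. Left multiplication by a is an order
  isomorphism from M onto the elements left divisible by a, so it preserves lcms:
  a lcm(b, c) = lcm(ab, ac). This is the left brace axiom, with M itself as the multiplicative
  monoid. For a Gaussian monoid the same construction applied to the opposite monoid, whose left
  lcms are the right lcms of M, yields a right brace on M.\<close>

lemma is_lcm_wrt_unique:
  assumes "\<And>x y. R x y \<Longrightarrow> R y x \<Longrightarrow> x = y"
    and "is_lcm_wrt C R a b m" and "is_lcm_wrt C R a b m'"
  shows "m = m'"
  using assms unfolding is_lcm_wrt_def by blast

lemma is_lcm_wrt_commute: "is_lcm_wrt C R a b m \<Longrightarrow> is_lcm_wrt C R b a m"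
  unfolding is_lcm_wrt_def by blast

lemma is_lcm_wrt_assoc:
  assumes "\<And>x y z. R x y \<Longrightarrow> R y z \<Longrightarrow> R x z"
    and "is_lcm_wrt C R a b ab" and "is_lcm_wrt C R b c bc" and "is_lcm_wrt C R ab c m"
  shows "is_lcm_wrt C R a bc m"
  using assms unfolding is_lcm_wrt_def by meson

context monoid
begin

lemma left_divides_refl: "a \<in> carrier G \<Longrightarrow> left_divides G a a"
  unfolding left_divides_def by (metis r_one one_closed)

lemma left_divides_trans: "left_divides G a b \<Longrightarrow> left_divides G b c \<Longrightarrow> left_divides G a c"
  unfolding left_divides_def by (metis m_assoc m_closed)

lemma one_left_divides: "a \<in> carrier G \<Longrightarrow> left_divides G \<one> a"
  unfolding left_divides_def by (metis l_one one_closed)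

lemma left_divides_antisym:
  assumes lcancel: "left_cancellative G" and units: "Units G = {\<one>}"
    and "left_divides G a b" and "left_divides G b a"
  shows "a = b"
proof -
  obtain x y where a: "a \<in> carrier G" and x: "x \<in> carrier G" and y: "y \<in> carrier G"
    and b_eq: "b = a \<otimes> x" and a_eq: "a = b \<otimes> y"
    using assms(3,4) unfolding left_divides_def by blast
  have "a \<otimes> (x \<otimes> y) = (a \<otimes> x) \<otimes> y"
    using a x y by (simp add: m_assoc)
  also have "\<dots> = a \<otimes> \<one>"
    using a by (simp only: b_eq[symmetric] a_eq[symmetric] r_one)
  finally have xy: "x \<otimes> y = \<one>"
    using lcancel a x y unfolding left_cancellative_def by (meson m_closed one_closed)
  have "x \<otimes> (y \<otimes> x) = x \<otimes> \<one>"
    using x y xy by (simp flip: m_assoc)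
  then have yx: "y \<otimes> x = \<one>"
    using lcancel x y unfolding left_cancellative_def by (meson m_closed one_closed)
  have "x \<in> Units G"
    unfolding Units_def using x y xy yx by blast
  then show ?thesis
    using units a b_eq by simp
qed

lemma left_mult_is_lcm:
  assumes lcancel: "left_cancellative G" and a: "a \<in> carrier G"
    and lcm: "is_lcm_wrt (carrier G) (left_divides G) b c m"
  shows "is_lcm_wrt (carrier G) (left_divides G) (a \<otimes> b) (a \<otimes> c) (a \<otimes> m)"
proof -
  obtain u v where b: "b \<in> carrier G" and c: "c \<in> carrier G" and m: "m \<in> carrier G"
    and u: "u \<in> carrier G" and m_eq_u: "m = b \<otimes> u"
    and v: "v \<in> carrier G" and m_eq_v: "m = c \<otimes> v"
    using lcm unfolding is_lcm_wrt_def left_divides_def by blast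
  have "a \<otimes> m = (a \<otimes> b) \<otimes> u"
    using a b u unfolding m_eq_u by (simp add: m_assoc)
  moreover have "a \<otimes> m = (a \<otimes> c) \<otimes> v"
    using a c v unfolding m_eq_v by (simp add: m_assoc)
  ultimately have upper: "left_divides G (a \<otimes> b) (a \<otimes> m)" "left_divides G (a \<otimes> c) (a \<otimes> m)"
    unfolding left_divides_def using a b c m u v m_closed by blast+
  have least: "left_divides G (a \<otimes> m) n"
    if n: "n \<in> carrier G" "left_divides G (a \<otimes> b) n" "left_divides G (a \<otimes> c) n" for n
  proof -
    obtain x where x: "x \<in> carrier G" and n_eq_x: "n = a \<otimes> b \<otimes> x"
      using n(2) unfolding left_divides_def by blast
    obtain y where y: "y \<in> carrier G" and n_eq_y: "n = a \<otimes> c \<otimes> y"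
      using n(3) unfolding left_divides_def by blast
    have "a \<otimes> (b \<otimes> x) = a \<otimes> (c \<otimes> y)"
      using a b c x y n_eq_x n_eq_y by (simp add: m_assoc)
    then have bx: "b \<otimes> x = c \<otimes> y"
      using lcancel a m_closed[OF b x] m_closed[OF c y] unfolding left_cancellative_def by blast
    have "left_divides G b (b \<otimes> x)" "left_divides G c (b \<otimes> x)"
      unfolding left_divides_def using b c x y bx m_closed by blast+
    then have "left_divides G m (b \<otimes> x)"
      using lcm m_closed[OF b x] unfolding is_lcm_wrt_def by blast
    then obtain z where z: "z \<in> carrier G" and bx_eq: "b \<otimes> x = m \<otimes> z"
      unfolding left_divides_def by blast
    have "n = (a \<otimes> m) \<otimes> z"
      using a b m x z unfolding n_eq_x by (simp add: m_assoc bx_eq)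
    then show ?thesis
      unfolding left_divides_def using a m z n(1) m_closed by blast
  qed
  show ?thesis
    unfolding is_lcm_wrt_def using a m upper least by blast
qed

end

definition left_lcm :: "('a, 'b) monoid_scheme \<Rightarrow> 'a \<Rightarrow> 'a \<Rightarrow> 'a" where
  "left_lcm M a b = (SOME m. is_lcm_wrt (carrier M) (left_divides M) a b m)"

definition lcm_addition :: "'a monoid \<Rightarrow> 'a monoid" where
  "lcm_addition M = \<lparr>carrier = carrier M, mult = left_lcm M, one = \<one>\<^bsub>M\<^esub>\<rparr>"

locale lcm_monoid_struct = monoid M for M :: "'a monoid" (structure) +
  assumes lcm_monoid: "lcm_monoid M"
begin

lemma left_cancel: "left_cancellative M"
  using lcm_monoid unfolding lcm_monoid_def by blast

lemma Units_trivial: "Units M = {\<one>}"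
  using lcm_monoid unfolding lcm_monoid_def by blast

lemma left_lcm_is_lcm:
  "a \<in> carrier M \<Longrightarrow> b \<in> carrier M \<Longrightarrow> is_lcm_wrt (carrier M) (left_divides M) a b (left_lcm M a b)"
  using lcm_monoid unfolding lcm_monoid_def left_lcm_def by (metis someI)

lemma left_lcm_eqI:
  assumes "a \<in> carrier M" "b \<in> carrier M" "is_lcm_wrt (carrier M) (left_divides M) a b m"
  shows "left_lcm M a b = m"
  using left_divides_antisym[OF left_cancel Units_trivial] left_lcm_is_lcm[OF assms(1,2)] assms(3)
  by (rule is_lcm_wrt_unique)

lemma left_lcm_closed: "a \<in> carrier M \<Longrightarrow> b \<in> carrier M \<Longrightarrow> left_lcm M a b \<in> carrier M"
  using left_lcm_is_lcm unfolding is_lcm_wrt_def by blast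

lemma left_lcm_commute: "a \<in> carrier M \<Longrightarrow> b \<in> carrier M \<Longrightarrow> left_lcm M a b = left_lcm M b a"
  by (rule left_lcm_eqI) (simp_all add: is_lcm_wrt_commute[OF left_lcm_is_lcm])

lemma left_lcm_assoc:
  assumes "a \<in> carrier M" "b \<in> carrier M" "c \<in> carrier M"
  shows "left_lcm M (left_lcm M a b) c = left_lcm M a (left_lcm M b c)"
proof -
  have "is_lcm_wrt (carrier M) (left_divides M) a (left_lcm M b c) (left_lcm M (left_lcm M a b) c)"
    by (rule is_lcm_wrt_assoc[OF left_divides_trans left_lcm_is_lcm left_lcm_is_lcm left_lcm_is_lcm])
      (simp_all add: left_lcm_closed assms)
  then show ?thesis
    by (intro left_lcm_eqI[symmetric] left_lcm_closed assms)
qed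

lemma left_lcm_one_left: "a \<in> carrier M \<Longrightarrow> left_lcm M \<one> a = a"
  by (rule left_lcm_eqI) (simp_all add: is_lcm_wrt_def left_divides_refl one_left_divides)

lemma left_lcm_mult_distrib:
  assumes "a \<in> carrier M" "b \<in> carrier M" "c \<in> carrier M"
  shows "a \<otimes> left_lcm M b c = left_lcm M (a \<otimes> b) (a \<otimes> c)"
  by (intro left_lcm_eqI[symmetric] left_mult_is_lcm left_cancel left_lcm_is_lcm m_closed assms)

lemma comm_monoid_lcm_addition: "comm_monoid (lcm_addition M)"
  by (rule comm_monoidI)
    (simp_all add: lcm_addition_def left_lcm_closed left_lcm_assoc left_lcm_one_left,
      rule left_lcm_commute)

lemma left_M_brace_lcm_addition: "left_M_brace (lcm_addition M) M"
  using comm_monoid_lcm_addition unfolding left_M_brace_def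
  by (simp add: monoid_axioms lcm_addition_def left_lcm_mult_distrib)

end

lemma lcm_monoid_structI: "lcm_monoid M \<Longrightarrow> lcm_monoid_struct M"
  by (simp add: lcm_monoid_struct_def lcm_monoid_struct_axioms_def lcm_monoid_def)

definition opposite_monoid :: "('a, 'b) monoid_scheme \<Rightarrow> 'a monoid" where
  "opposite_monoid M = \<lparr>carrier = carrier M, mult = (\<lambda>x y. y \<otimes>\<^bsub>M\<^esub> x), one = \<one>\<^bsub>M\<^esub>\<rparr>"

context monoid
begin

lemma monoid_opposite: "monoid (opposite_monoid G)"
  by (rule monoidI) (auto simp: opposite_monoid_def m_assoc)

lemma Units_opposite: "Units (opposite_monoid G) = Units G"
  unfolding Units_def opposite_monoid_def by auto

end

lemma carrier_opposite [simp]: "carrier (opposite_monoid M) = carrier M"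
  and one_opposite [simp]: "\<one>\<^bsub>opposite_monoid M\<^esub> = \<one>\<^bsub>M\<^esub>"
  by (simp_all add: opposite_monoid_def)

lemma left_divides_opposite: "left_divides (opposite_monoid M) = right_divides M"
  unfolding left_divides_def right_divides_def opposite_monoid_def by auto

lemma left_cancellative_opposite: "left_cancellative (opposite_monoid M) = right_cancellative M"
  unfolding left_cancellative_def right_cancellative_def opposite_monoid_def by simp

lemma lcm_monoid_opposite:
  assumes "lcm_monoid M" and "gaussian_monoid M"
  shows "lcm_monoid (opposite_monoid M)"
proof -
  interpret monoid M
    using assms(1) unfolding lcm_monoid_def by blast
  show ?thesis
    using assms monoid_opposite Units_opposite
    unfolding lcm_monoid_def gaussian_monoid_def left_divides_opposite left_cancellative_opposite
    by simp
qed

lemma right_M_brace_iff_left_opposite: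
  "monoid M \<Longrightarrow> right_M_brace A M \<longleftrightarrow> left_M_brace A (opposite_monoid M)"
  using monoid.monoid_opposite[of M]
  unfolding left_M_brace_def right_M_brace_def by (auto simp: opposite_monoid_def)

theorem theoremA:
  fixes M :: "'a monoid"
  assumes "lcm_monoid M"
  shows "(\<exists>A P :: 'a monoid. left_M_brace A P \<and> P \<cong> M) \<and>
         (gaussian_monoid M \<longrightarrow>
            (\<exists>A A' P :: 'a monoid. left_M_brace A P \<and> right_M_brace A' P \<and> P \<cong> M))"
proof -
  interpret lcm_monoid_struct M
    using assms by (rule lcm_monoid_structI)
  have left: "left_M_brace (lcm_addition M) M"
    by (rule left_M_brace_lcm_addition)
  have right: "right_M_brace (lcm_addition (opposite_monoid M)) M" if "gaussian_monoid M"
  proof -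
    interpret opposite: lcm_monoid_struct "opposite_monoid M"
      using lcm_monoid_opposite[OF assms that] by (rule lcm_monoid_structI)
    show ?thesis
      using opposite.left_M_brace_lcm_addition right_M_brace_iff_left_opposite monoid_axioms
      by blast
  qed
  show ?thesis
    using left right iso_refl by blast
qed

end
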